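(* Let $A_1,\dots,A_k\in H_n$ and $B_1,\dots,B_k\in H_m$. There is a completely positive map $\Phi:M_n\to M_m$ with $\Phi(A_j)=B_j$ for $j=1,\dots,k$ if and only if there exist $\gamma>0$ and a unital completely positive map $\Psi:M_{n+1}\to M_m$ with $\Psi(A_j\oplus[0])=\gamma^{-1}B_j$ for $j=1,\dots,k$.
   Context: $H_n$ is the set of $n\times n$ Hermitian matrices; $A\oplus[0]$ denotes the $(n+1)\times(n+1)$ block diagonal matrix with blocks $A$ and the $1\times1$ zero matrix. A linear map is completely positive if all ampliations $I_k\otimes\Phi$ preserve positive semidefiniteness; unital means $\Psi(I_{n+1})=I_m$. *)

theory Defs
  imports "HOL-Analysis.Analysis" "Jordan_Normal_Form.Matrix"
begin

definition hermitian_mat :: "nat \<Rightarrow> complex mat \<Rightarrow> bool" where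
  "hermitian_mat n A \<longleftrightarrow> A \<in> carrier_mat n n \<and>
     (\<forall>i<n. \<forall>j<n. A $$ (i, j) = cnj (A $$ (j, i)))"

definition psd_mat :: "nat \<Rightarrow> complex mat \<Rightarrow> bool" where
  "psd_mat n A \<longleftrightarrow> hermitian_mat n A \<and>
     (\<forall>v \<in> carrier_vec n. Im (conjugate v \<bullet> (A *\<^sub>v v)) = 0 \<and> 0 \<le> Re (conjugate v \<bullet> (A *\<^sub>v v)))"

text \<open>Complex-linear maps from M_n to M_m (only values on M_n matter).\<close>
definition linear_map_mat :: "nat \<Rightarrow> nat \<Rightarrow> (complex mat \<Rightarrow> complex mat) \<Rightarrow> bool" where
  "linear_map_mat n m \<Phi> \<longleftrightarrow>
     (\<forall>X \<in> carrier_mat n n. \<Phi> X \<in> carrier_mat m m) \<and>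
     (\<forall>X \<in> carrier_mat n n. \<forall>Y \<in> carrier_mat n n. \<Phi> (X + Y) = \<Phi> X + \<Phi> Y) \<and>
     (\<forall>c. \<forall>X \<in> carrier_mat n n. \<Phi> (c \<cdot>\<^sub>m X) = c \<cdot>\<^sub>m \<Phi> X)"

text \<open>Ampliation I_k \<otimes> \<Phi>: a (k n) x (k n) matrix viewed as a k x k block matrix with
  n x n blocks is mapped blockwise by \<Phi> to a (k m) x (k m) matrix.\<close>
definition ampliation :: "nat \<Rightarrow> nat \<Rightarrow> nat \<Rightarrow> (complex mat \<Rightarrow> complex mat) \<Rightarrow> complex mat \<Rightarrow> complex mat" where
  "ampliation k n m \<Phi> X = mat (k * m) (k * m) (\<lambda>(r, s).
     \<Phi> (mat n n (\<lambda>(p, q). X $$ ((r div m) * n + p, (s div m) * n + q))) $$ (r mod m, s mod m))"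

definition completely_positive :: "nat \<Rightarrow> nat \<Rightarrow> (complex mat \<Rightarrow> complex mat) \<Rightarrow> bool" where
  "completely_positive n m \<Phi> \<longleftrightarrow> linear_map_mat n m \<Phi> \<and>
     (\<forall>k X. psd_mat (k * n) X \<longrightarrow> psd_mat (k * m) (ampliation k n m \<Phi> X))"

definition unital_map :: "nat \<Rightarrow> nat \<Rightarrow> (complex mat \<Rightarrow> complex mat) \<Rightarrow> bool" where
  "unital_map n m \<Psi> \<longleftrightarrow> \<Psi> (1\<^sub>m n) = 1\<^sub>m m"

definition direct_sum_zero :: "nat \<Rightarrow> complex mat \<Rightarrow> complex mat" where
  "direct_sum_zero n A = four_block_mat A (0\<^sub>m n 1) (0\<^sub>m 1 n) (0\<^sub>m 1 1)"

end

theory Submission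
  imports Defs
begin

text \<open>
  Backward direction (compression): Phi(X) = gamma Psi(X (+) [0]).  Its k-th ampliation at X is
  gamma times the ampliation of Psi at the zero padding of X, which is again psd.

  Forward direction (corner extension): let P = Phi(I_n), which is Hermitian, and pick eps > 0 so
  small that C = I_m - eps P is diagonally dominant.  Then Psi(Y) = eps Phi(Y_11) + y_(n+1,n+1) C,
  with Y_11 the leading n x n corner, is unital and maps A (+) [0] to eps Phi(A).  Its k-th
  ampliation at a psd Y splits as eps (ampliation of Phi at a principal submatrix of Y) plus
  Z (x) C, where Z is the principal submatrix of Y on the last index of each block; Z (x) C is
  psd because C is diagonally dominant.
\<close>

definition sesq :: "nat \<Rightarrow> complex mat \<Rightarrow> (nat \<Rightarrow> complex) \<Rightarrow> (nat \<Rightarrow> complex) \<Rightarrow> complex" where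
  "sesq N M x w = (\<Sum>i<N. \<Sum>j<N. cnj (x i) * M$$(i,j) * w j)"

abbreviation qform :: "nat \<Rightarrow> complex mat \<Rightarrow> (nat \<Rightarrow> complex) \<Rightarrow> complex" where
  "qform N M f \<equiv> sesq N M f f"

lemma hermitian_carrier: "hermitian_mat N M \<Longrightarrow> M \<in> carrier_mat N N"
  by (simp add: hermitian_mat_def)

text \<open>Entrywise Hermitian symmetry; used only in instantiated form, since as a rewrite rule it loops.\<close>

lemma hermitian_entry: "hermitian_mat N M \<Longrightarrow> i < N \<Longrightarrow> j < N \<Longrightarrow> M$$(i,j) = cnj (M$$(j,i))"
  unfolding hermitian_mat_def by blast

lemma qform_vec:
  "M \<in> carrier_mat N N \<Longrightarrow> v \<in> carrier_vec N \<Longrightarrow> conjugate v \<bullet> (M *\<^sub>v v) = qform N M (\<lambda>i. v $ i)"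
  unfolding sesq_def scalar_prod_def
  by (auto simp: mult_mat_vec_def scalar_prod_def sum_distrib_left atLeast0LessThan mult.assoc
      intro!: sum.cong)

lemma psd_iff:
  "psd_mat N M \<longleftrightarrow> hermitian_mat N M \<and> (\<forall>f. Im (qform N M f) = 0 \<and> 0 \<le> Re (qform N M f))"
proof
  assume psd: "psd_mat N M"
  have "Im (qform N M f) = 0 \<and> 0 \<le> Re (qform N M f)" for f
  proof -
    have "qform N M f = qform N M (\<lambda>i. Matrix.vec N f $ i)"
      unfolding sesq_def by (auto intro!: sum.cong)
    also have "\<dots> = conjugate (Matrix.vec N f) \<bullet> (M *\<^sub>v Matrix.vec N f)"
      using psd qform_vec[of M N "Matrix.vec N f"] by (simp add: psd_mat_def hermitian_carrier)
    finally show ?thesis using psd unfolding psd_mat_def by simp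
  qed
  then show "hermitian_mat N M \<and> (\<forall>f. Im (qform N M f) = 0 \<and> 0 \<le> Re (qform N M f))"
    using psd by (simp add: psd_mat_def)
next
  assume herm_qform: "hermitian_mat N M \<and> (\<forall>f. Im (qform N M f) = 0 \<and> 0 \<le> Re (qform N M f))"
  then have "M \<in> carrier_mat N N" by (simp add: hermitian_carrier)
  then show "psd_mat N M"
    unfolding psd_mat_def using herm_qform qform_vec by auto
qed

lemma psd_add:
  assumes A: "psd_mat N A" and B: "psd_mat N B"
  shows "psd_mat N (A + B)"
proof -
  have hA: "hermitian_mat N A" and hB: "hermitian_mat N B"
    using A B by (auto simp: psd_iff)
  note cA = hermitian_carrier[OF hA] and cB = hermitian_carrier[OF hB]
  have "hermitian_mat N (A + B)" unfolding hermitian_mat_def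
  proof (intro conjI allI impI)
    fix i j assume "i < N" "j < N"
    then show "(A + B)$$(i,j) = cnj ((A + B)$$(j,i))"
      using cA cB hermitian_entry[OF hA, of i j] hermitian_entry[OF hB, of i j] by simp
  qed (use cA cB in simp)
  moreover have "qform N (A + B) f = qform N A f + qform N B f" for f
    unfolding sesq_def sum.distrib[symmetric]
    by (intro sum.cong refl) (use cA cB in \<open>simp add: algebra_simps\<close>)
  ultimately show ?thesis using A B by (simp add: psd_iff)
qed

lemma psd_smult:
  assumes A: "psd_mat N A" and c: "0 \<le> c"
  shows "psd_mat N (complex_of_real c \<cdot>\<^sub>m A)"
proof -
  have hA: "hermitian_mat N A" using A by (simp add: psd_iff)
  note cA = hermitian_carrier[OF hA]
  have "hermitian_mat N (complex_of_real c \<cdot>\<^sub>m A)" unfolding hermitian_mat_def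
  proof (intro conjI allI impI)
    fix i j assume "i < N" "j < N"
    then show "(complex_of_real c \<cdot>\<^sub>m A)$$(i,j) = cnj ((complex_of_real c \<cdot>\<^sub>m A)$$(j,i))"
      using cA hermitian_entry[OF hA, of i j] by simp
  qed (use cA in simp)
  moreover have "qform N (complex_of_real c \<cdot>\<^sub>m A) f = complex_of_real c * qform N A f" for f
    unfolding sesq_def sum_distrib_left
    by (intro sum.cong refl) (use cA in \<open>simp add: algebra_simps\<close>)
  ultimately show ?thesis using A c by (simp add: psd_iff)
qed

lemma psd_one: "psd_mat N (1\<^sub>m N)"
proof -
  have "qform N (1\<^sub>m N) f = (\<Sum>i<N. complex_of_real ((cmod (f i))\<^sup>2))" for f
  proof -
    have "qform N (1\<^sub>m N) f = (\<Sum>i<N. \<Sum>j<N. if j = i then cnj (f i) * f i else 0)"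
      unfolding sesq_def by (intro sum.cong refl) auto
    also have "\<dots> = (\<Sum>i<N. complex_of_real ((cmod (f i))\<^sup>2))"
      using complex_norm_square by (simp add: mult.commute)
    finally show ?thesis .
  qed
  then show ?thesis by (simp add: psd_iff hermitian_mat_def Re_sum Im_sum sum_nonneg)
qed

lemma sum2_reindex:
  fixes e :: "nat \<Rightarrow> nat"
  assumes inj: "inj_on e {..<N}" and im: "e ` {..<N} \<subseteq> {..<M}"
    and zero: "\<And>i j. i < M \<Longrightarrow> j < M \<Longrightarrow> i \<notin> e ` {..<N} \<or> j \<notin> e ` {..<N} \<Longrightarrow> F i j = 0"
  shows "(\<Sum>i<M. \<Sum>j<M. F i j) = (\<Sum>a<N. \<Sum>b<N. (F (e a) (e b) :: 'a::comm_monoid_add))"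
proof -
  let ?E = "e ` {..<N}"
  have "(\<Sum>i<M. \<Sum>j<M. F i j) = (\<Sum>i\<in>?E. \<Sum>j<M. F i j)"
    by (rule sum.mono_neutral_right) (use im zero in auto)
  also have "\<dots> = (\<Sum>i\<in>?E. \<Sum>j\<in>?E. F i j)"
  proof (rule sum.cong[OF refl])
    fix i assume "i \<in> ?E"
    then show "(\<Sum>j<M. F i j) = (\<Sum>j\<in>?E. F i j)"
      by (intro sum.mono_neutral_right) (use im zero in auto)
  qed
  also have "\<dots> = (\<Sum>a<N. \<Sum>b<N. F (e a) (e b))"
    by (simp add: sum.reindex[OF inj])
  finally show ?thesis .
qed

definition principal_submatrix :: "nat \<Rightarrow> (nat \<Rightarrow> nat) \<Rightarrow> complex mat \<Rightarrow> complex mat" where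
  "principal_submatrix N e Y = Matrix.mat N N (\<lambda>(i,j). Y$$(e i, e j))"

text \<open>Principal submatrices of psd matrices are psd: restrict the test vector to the image of e.\<close>

lemma psd_principal_submatrix:
  assumes Y: "psd_mat M Y" and inj: "inj_on e {..<N}" and im: "e ` {..<N} \<subseteq> {..<M}"
  shows "psd_mat N (principal_submatrix N e Y)"
proof -
  let ?Y = "principal_submatrix N e Y"
  have hY: "hermitian_mat M Y" using Y by (simp add: psd_iff)
  have "hermitian_mat N ?Y" unfolding hermitian_mat_def
  proof (intro conjI allI impI)
    fix i j assume "i < N" "j < N"
    then show "?Y$$(i,j) = cnj (?Y$$(j,i))"
      using im hermitian_entry[OF hY, of "e i" "e j"] by (auto simp: principal_submatrix_def)
  qed (simp add: principal_submatrix_def)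
  moreover have "qform N ?Y f = qform M Y (\<lambda>j. if j \<in> e ` {..<N} then f (inv_into {..<N} e j) else 0)"
    (is "_ = qform M Y ?g") for f
  proof -
    have "qform M Y ?g = (\<Sum>a<N. \<Sum>b<N. cnj (?g (e a)) * Y$$(e a, e b) * ?g (e b))"
      unfolding sesq_def by (rule sum2_reindex[OF inj im]) auto
    also have "\<dots> = qform N ?Y f"
      unfolding sesq_def principal_submatrix_def
      by (intro sum.cong refl) (simp add: inv_into_f_f[OF inj])
    finally show ?thesis by simp
  qed
  ultimately show ?thesis using Y by (simp add: psd_iff)
qed

lemma psd_zero_padding:
  assumes X: "psd_mat N X" and inj: "inj_on e {..<N}" and im: "e ` {..<N} \<subseteq> {..<M}"
    and X'_carrier: "X' \<in> carrier_mat M M"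
    and X'_zero: "\<And>i j. i < M \<Longrightarrow> j < M \<Longrightarrow> i \<notin> e ` {..<N} \<or> j \<notin> e ` {..<N} \<Longrightarrow> X'$$(i,j) = 0"
    and X'_copy: "\<And>a b. a < N \<Longrightarrow> b < N \<Longrightarrow> X'$$(e a, e b) = X$$(a,b)"
  shows "psd_mat M X'"
proof -
  have hX: "hermitian_mat N X" using X by (simp add: psd_iff)
  have "hermitian_mat M X'" unfolding hermitian_mat_def
  proof (intro conjI X'_carrier allI impI)
    fix i j assume ij: "i < M" "j < M"
    show "X'$$(i,j) = cnj (X'$$(j,i))"
    proof (cases "i \<in> e ` {..<N} \<and> j \<in> e ` {..<N}")
      case True
      then obtain a b where "a < N" "b < N" "i = e a" "j = e b" by auto
      then show ?thesis using X'_copy hermitian_entry[OF hX, of a b] by simp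
    qed (use ij X'_zero in auto)
  qed
  moreover have "qform M X' f = qform N X (\<lambda>a. f (e a))" for f
  proof -
    have "qform M X' f = (\<Sum>a<N. \<Sum>b<N. cnj (f (e a)) * X'$$(e a, e b) * f (e b))"
      unfolding sesq_def by (rule sum2_reindex[OF inj im]) (simp add: X'_zero)
    then show ?thesis unfolding sesq_def by (simp add: X'_copy)
  qed
  ultimately show ?thesis using X by (simp add: psd_iff)
qed

lemma sesq_hermitian_swap:
  assumes "hermitian_mat N Z"
  shows "sesq N Z w x = cnj (sesq N Z x w)"
proof -
  have "cnj (sesq N Z x w) = (\<Sum>i<N. \<Sum>j<N. x i * Z$$(j,i) * cnj (w j))"
    unfolding sesq_def cnj_sum
  proof (intro sum.cong refl)
    fix i j assume "i \<in> {..<N}" "j \<in> {..<N}"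
    then show "cnj (cnj (x i) * Z$$(i,j) * w j) = x i * Z$$(j,i) * cnj (w j)"
      using hermitian_entry[OF assms, of i j] by simp
  qed
  also have "\<dots> = (\<Sum>j<N. \<Sum>i<N. x i * Z$$(j,i) * cnj (w j))" by (rule sum.swap)
  also have "\<dots> = sesq N Z w x" unfolding sesq_def by (simp add: algebra_simps)
  finally show ?thesis by simp
qed

lemma qform_add_scaled:
  "qform N Z (\<lambda>i. x i + u * w i) =
     qform N Z x + u * sesq N Z x w + cnj u * sesq N Z w x + (cnj u * u) * qform N Z w"
  unfolding sesq_def by (simp add: algebra_simps sum.distrib sum_distrib_left)

text \<open>The off-diagonal entries of a psd Gram form are controlled by the diagonal ones:
  2 Re(c <x,w>) >= -|c| (<x,x> + <w,w>), from positivity at x + u w with |u| = 1.\<close>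

lemma psd_sesq_lower_bound:
  assumes Z: "psd_mat N Z"
  shows "- (cmod c * (Re (qform N Z x) + Re (qform N Z w))) \<le> 2 * Re (c * sesq N Z x w)"
proof (cases "c = 0")
  case False
  have hZ: "hermitian_mat N Z" and nonneg: "\<And>g. 0 \<le> Re (qform N Z g)"
    using Z by (auto simp: psd_iff)
  define u where "u = c / complex_of_real (cmod c)"
  have unit: "cnj u * u = 1"
    using False complex_norm_square[of c] by (simp add: u_def power2_eq_square mult.commute)
  have c_eq: "c = complex_of_real (cmod c) * u" using False by (simp add: u_def)
  let ?s = "sesq N Z x w"
  have "qform N Z (\<lambda>i. x i + u * w i) = qform N Z x + u * ?s + cnj (u * ?s) + qform N Z w"
    using qform_add_scaled[of N Z x u w] sesq_hermitian_swap[OF hZ, of w x] unit by simp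
  then have "0 \<le> Re (qform N Z x) + Re (qform N Z w) + 2 * Re (u * ?s)"
    using nonneg[of "\<lambda>i. x i + u * w i"] by simp
  then have "0 \<le> cmod c * (Re (qform N Z x) + Re (qform N Z w) + 2 * Re (u * ?s))"
    by simp
  moreover have "Re (c * ?s) = cmod c * Re (u * ?s)"
    by (subst c_eq) (simp add: mult.assoc)
  ultimately show ?thesis by (simp add: algebra_simps)
qed simp

definition diag_dominant :: "nat \<Rightarrow> complex mat \<Rightarrow> bool" where
  "diag_dominant m C \<longleftrightarrow> hermitian_mat m C \<and>
     (\<forall>a<m. (\<Sum>b<m. if b = a then 0 else cmod (C$$(a,b))) \<le> Re (C$$(a,a)))"

lemma hermitian_pairing_real:
  assumes C: "hermitian_mat m C" and H: "\<And>a b. H b a = cnj (H a b)"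
  shows "Im (\<Sum>a<m. \<Sum>b<m. C$$(a,b) * H a b) = 0"
proof -
  let ?p = "\<Sum>a<m. \<Sum>b<m. C$$(a,b) * H a b"
  have "cnj ?p = (\<Sum>a<m. \<Sum>b<m. C$$(b,a) * H b a)"
    unfolding cnj_sum
  proof (intro sum.cong refl)
    fix a b assume "a \<in> {..<m}" "b \<in> {..<m}"
    then show "cnj (C$$(a,b) * H a b) = C$$(b,a) * H b a"
      using hermitian_entry[OF C, of b a] H[of a b] by simp
  qed
  also have "\<dots> = ?p" by (rule sum.swap)
  finally have "Im (cnj ?p) = Im ?p" by (rule arg_cong)
  then show ?thesis unfolding cnj.simps by linarith
qed

lemma offdiag_weighted_sum:
  fixes h :: "nat \<Rightarrow> real"
  assumes C: "hermitian_mat m C"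
  shows "(\<Sum>a<m. \<Sum>b<m. if b = a then 0 else cmod (C$$(a,b)) * (h a + h b) / 2) =
         (\<Sum>a<m. h a * (\<Sum>b<m. if b = a then 0 else cmod (C$$(a,b))))"
proof -
  let ?D = "\<lambda>a. \<Sum>b<m. if b = a then 0 else cmod (C$$(a,b))"
  have row: "(\<Sum>b<m. if b = a then 0 else cmod (C$$(a,b)) * h a / 2) = h a * ?D a / 2" for a
    unfolding sum_distrib_left sum_divide_distrib by (intro sum.cong refl) simp
  have "(\<Sum>a<m. \<Sum>b<m. if b = a then 0 else cmod (C$$(a,b)) * h b / 2)
      = (\<Sum>b<m. \<Sum>a<m. if b = a then 0 else cmod (C$$(a,b)) * h b / 2)" by (rule sum.swap)
  also have "\<dots> = (\<Sum>b<m. \<Sum>a<m. if a = b then 0 else cmod (C$$(b,a)) * h b / 2)"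
  proof (intro sum.cong refl)
    fix b a assume "b \<in> {..<m}" "a \<in> {..<m}"
    then show "(if b = a then 0 else cmod (C$$(a,b)) * h b / 2) =
        (if a = b then 0 else cmod (C$$(b,a)) * h b / 2)"
      using hermitian_entry[OF C, of a b] by auto
  qed
  finally have col: "(\<Sum>a<m. \<Sum>b<m. if b = a then 0 else cmod (C$$(a,b)) * h b / 2)
      = (\<Sum>a<m. h a * ?D a / 2)" by (simp add: row)
  have "(\<Sum>a<m. \<Sum>b<m. if b = a then 0 else cmod (C$$(a,b)) * (h a + h b) / 2) =
      (\<Sum>a<m. \<Sum>b<m. if b = a then 0 else cmod (C$$(a,b)) * h a / 2) +
      (\<Sum>a<m. \<Sum>b<m. if b = a then 0 else cmod (C$$(a,b)) * h b / 2)"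
    by (simp add: sum.distrib[symmetric] add_divide_distrib distrib_left if_distrib cong: if_cong)
  also have "\<dots> = (\<Sum>a<m. h a * ?D a)" by (simp add: row col sum.distrib[symmetric])
  finally show ?thesis .
qed

lemma diag_dominant_pairing_nonneg:
  assumes C: "diag_dominant m C"
    and H_diag: "\<And>a. Im (H a a) = 0 \<and> 0 \<le> Re (H a a)"
    and H_off: "\<And>a b c. - (cmod c * (Re (H a a) + Re (H b b))) \<le> 2 * Re (c * H a b)"
  shows "0 \<le> Re (\<Sum>a<m. \<Sum>b<m. C$$(a,b) * H a b)"
proof -
  have hC: "hermitian_mat m C" using C by (simp add: diag_dominant_def)
  define h where "h a = Re (H a a)" for a
  define D where "D a = (\<Sum>b<m. if b = a then 0 else cmod (C$$(a,b)))" for a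
  define diag where "diag a b = (if b = a then Re (C$$(a,a)) * h a else 0)" for a b
  define off where "off a b = (if b = a then 0 else cmod (C$$(a,b)) * (h a + h b) / 2)" for a b
  have entry_bound: "diag a b - off a b \<le> Re (C$$(a,b) * H a b)" for a b
  proof (cases "b = a")
    case True
    then show ?thesis using H_diag[of a] by (simp add: diag_def off_def h_def)
  next
    case False
    then show ?thesis using H_off[of "C$$(a,b)" a b] by (simp add: diag_def off_def h_def field_simps)
  qed
  have diag_sum: "(\<Sum>a<m. \<Sum>b<m. diag a b) = (\<Sum>a<m. Re (C$$(a,a)) * h a)"
    by (intro sum.cong refl) (simp add: diag_def sum.delta)
  have "0 \<le> (\<Sum>a<m. h a * (Re (C$$(a,a)) - D a))"
    using C H_diag by (intro sum_nonneg mult_nonneg_nonneg) (auto simp: diag_dominant_def D_def h_def)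
  also have "\<dots> = (\<Sum>a<m. \<Sum>b<m. diag a b) - (\<Sum>a<m. \<Sum>b<m. off a b)"
    unfolding diag_sum off_def offdiag_weighted_sum[OF hC] D_def[symmetric]
    by (simp add: sum_subtractf algebra_simps)
  also have "\<dots> = (\<Sum>a<m. \<Sum>b<m. diag a b - off a b)" by (simp add: sum_subtractf)
  also have "\<dots> \<le> (\<Sum>a<m. \<Sum>b<m. Re (C$$(a,b) * H a b))" by (intro sum_mono entry_bound)
  also have "\<dots> = Re (\<Sum>a<m. \<Sum>b<m. C$$(a,b) * H a b)" by (simp add: Re_sum)
  finally show ?thesis .
qed

text \<open>For Hermitian P, the matrix I - eps P is diagonally dominant once eps is small: take
  eps = 1 / (1 + sum_ab |P_ab|).\<close>

lemma diag_dominant_shift: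
  assumes P: "hermitian_mat m P"
  shows "\<exists>\<epsilon>>0. diag_dominant m (1\<^sub>m m - complex_of_real \<epsilon> \<cdot>\<^sub>m P)"
proof -
  define S where "S = (\<Sum>a<m. \<Sum>b<m. cmod (P$$(a,b)))"
  define \<epsilon> where "\<epsilon> = inverse (1 + S)"
  let ?C = "1\<^sub>m m - complex_of_real \<epsilon> \<cdot>\<^sub>m P"
  have S_nonneg: "0 \<le> S" unfolding S_def by (intro sum_nonneg) auto
  then have \<epsilon>_pos: "0 < \<epsilon>" and \<epsilon>S: "\<epsilon> * S \<le> 1" by (simp_all add: \<epsilon>_def field_simps)
  have P_carrier: "P \<in> carrier_mat m m" by (rule hermitian_carrier[OF P])
  have C_entry: "?C $$ (a,b) = (if a = b then 1 else 0) - complex_of_real \<epsilon> * P$$(a,b)"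
    if "a < m" "b < m" for a b
    using that P_carrier by simp
  have "hermitian_mat m ?C" unfolding hermitian_mat_def
  proof (intro conjI allI impI)
    show "?C \<in> carrier_mat m m" using P_carrier by (intro minus_carrier_mat smult_carrier_mat)
    fix a b assume "a < m" "b < m"
    then show "?C $$ (a,b) = cnj (?C $$ (b,a))" using hermitian_entry[OF P, of a b] by (simp add: C_entry)
  qed
  moreover have "(\<Sum>b<m. if b = a then 0 else cmod (?C$$(a,b))) \<le> Re (?C$$(a,a))" if a: "a < m" for a
  proof -
    define E where "E = (\<Sum>b<m. if b = a then 0 else cmod (P$$(a,b)))"
    have "(\<Sum>b<m. if b = a then 0 else cmod (?C$$(a,b))) = (\<Sum>b<m. \<epsilon> * (if b = a then 0 else cmod (P$$(a,b))))"
      using a \<epsilon>_pos by (intro sum.cong refl) (simp add: C_entry norm_mult)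
    also have "\<dots> = \<epsilon> * E" unfolding E_def by (rule sum_distrib_left[symmetric])
    finally have off: "(\<Sum>b<m. if b = a then 0 else cmod (?C$$(a,b))) = \<epsilon> * E" .
    have "E + cmod (P$$(a,a)) =
        (\<Sum>b<m. (if b = a then 0 else cmod (P$$(a,b))) + (if b = a then cmod (P$$(a,b)) else 0))"
      unfolding sum.distrib E_def using a by (simp add: sum.delta)
    also have "\<dots> = (\<Sum>b<m. cmod (P$$(a,b)))" by (intro sum.cong) auto
    also have "\<dots> \<le> S" unfolding S_def
      by (rule member_le_sum[of a "{..<m}" "\<lambda>a. \<Sum>b<m. cmod (P$$(a,b))"]) (auto simp: sum_nonneg a)
    finally have "\<epsilon> * (E + Re (P$$(a,a))) \<le> \<epsilon> * S"
      using complex_Re_le_cmod[of "P$$(a,a)"] \<epsilon>_pos by (intro mult_left_mono) auto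
    then show ?thesis using off a \<epsilon>S by (simp add: C_entry algebra_simps)
  qed
  ultimately show ?thesis using \<epsilon>_pos unfolding diag_dominant_def by blast
qed

text \<open>Arithmetic of the block indexing r = R m + a used throughout for k m x k m block matrices.\<close>

lemma block_index_lt: "R < k \<Longrightarrow> a < m \<Longrightarrow> R * m + a < k * (m::nat)"
proof -
  assume "R < k" "a < m"
  then have "Suc R * m \<le> k * m" by (intro mult_le_mono1) simp
  with \<open>a < m\<close> show ?thesis by simp
qed

lemma block_div_mod_lt:
  assumes "r < k * (m::nat)"
  shows "r div m < k" and "r mod m < m"
proof -
  have "m > 0" using assms by (cases m) auto
  then show "r mod m < m" by simp
  show "r div m < k" using assms by (simp add: less_mult_imp_div_less)
qed

lemma block_index_div: "b < d \<Longrightarrow> (a*d + b) div d = (a::nat)"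
  by simp

lemma block_index_mod: "b < d \<Longrightarrow> (a*d + b) mod d = (b::nat)"
  by simp

lemma sum_blocks:
  fixes h :: "nat \<Rightarrow> 'a::comm_monoid_add"
  shows "(\<Sum>i<k*N. h i) = (\<Sum>R<k. \<Sum>p<N. h (R*N+p))"
proof -
  have "(\<Sum>i<k*N. h i) = (\<Sum>R<k. sum h {R*N..<R*N+N})"
    using sum.nat_group[of h N k] by (simp add: mult.commute)
  also have "\<dots> = (\<Sum>R<k. \<Sum>p<N. h (R*N+p))"
  proof (rule sum.cong[OF refl])
    fix R
    show "sum h {R*N..<R*N+N} = (\<Sum>p<N. h (R*N+p))"
      using sum.shift_bounds_nat_ivl[of h 0 "R*N" N] by (simp add: add.commute atLeast0LessThan)
  qed
  finally show ?thesis .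
qed

definition kron_mat :: "nat \<Rightarrow> nat \<Rightarrow> complex mat \<Rightarrow> complex mat \<Rightarrow> complex mat" where
  "kron_mat k m Z C = Matrix.mat (k*m) (k*m) (\<lambda>(r,s). Z$$(r div m, s div m) * C$$(r mod m, s mod m))"

lemma kron_mat_carrier: "kron_mat k m Z C \<in> carrier_mat (k*m) (k*m)"
  by (simp add: kron_mat_def)

lemma kron_mat_dim [simp]:
  "dim_row (kron_mat k m Z C) = k*m" "dim_col (kron_mat k m Z C) = k*m"
  by (simp_all add: kron_mat_def)

lemma qform_kron_mat:
  "qform (k*m) (kron_mat k m Z C) f =
     (\<Sum>a<m. \<Sum>b<m. C$$(a,b) * sesq k Z (\<lambda>R. f (R*m+a)) (\<lambda>S. f (S*m+b)))"
proof -
  have "qform (k*m) (kron_mat k m Z C) f =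
      (\<Sum>R<k. \<Sum>a<m. \<Sum>S<k. \<Sum>b<m. cnj (f (R*m+a)) * (Z$$(R,S) * C$$(a,b)) * f (S*m+b))"
    unfolding sesq_def sum_blocks
    by (intro sum.cong refl) (simp add: kron_mat_def block_index_lt)
  also have "\<dots> = (\<Sum>a<m. \<Sum>R<k. \<Sum>b<m. \<Sum>S<k. cnj (f (R*m+a)) * (Z$$(R,S) * C$$(a,b)) * f (S*m+b))"
    by (subst sum.swap) (rule sum.cong[OF refl], rule sum.cong[OF refl], rule sum.swap)
  also have "\<dots> = (\<Sum>a<m. \<Sum>b<m. \<Sum>R<k. \<Sum>S<k. cnj (f (R*m+a)) * (Z$$(R,S) * C$$(a,b)) * f (S*m+b))"
    by (rule sum.cong[OF refl], rule sum.swap)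
  also have "\<dots> = (\<Sum>a<m. \<Sum>b<m. C$$(a,b) * sesq k Z (\<lambda>R. f (R*m+a)) (\<lambda>S. f (S*m+b)))"
    unfolding sesq_def by (simp add: sum_distrib_left algebra_simps)
  finally show ?thesis .
qed

lemma psd_kron_diag_dominant:
  assumes Z: "psd_mat k Z" and C: "diag_dominant m C"
  shows "psd_mat (k*m) (kron_mat k m Z C)"
proof -
  have hZ: "hermitian_mat k Z" using Z by (simp add: psd_iff)
  have hC: "hermitian_mat m C" using C by (simp add: diag_dominant_def)
  have "hermitian_mat (k*m) (kron_mat k m Z C)" unfolding hermitian_mat_def
  proof (intro conjI allI impI)
    fix r s assume r: "r < k*m" and s: "s < k*m"
    then show "kron_mat k m Z C $$ (r,s) = cnj (kron_mat k m Z C $$ (s,r))"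
      using block_div_mod_lt[OF r] block_div_mod_lt[OF s]
        hermitian_entry[OF hC, of "r mod m" "s mod m"] hermitian_entry[OF hZ, of "r div m" "s div m"]
      by (simp add: kron_mat_def)
  qed (simp add: kron_mat_def)
  moreover have "Im (qform (k*m) (kron_mat k m Z C) f) = 0 \<and> 0 \<le> Re (qform (k*m) (kron_mat k m Z C) f)" for f
  proof -
    define H where "H a b = sesq k Z (\<lambda>R. f (R*m+a)) (\<lambda>S. f (S*m+b))" for a b
    have H_sym: "H b a = cnj (H a b)" for a b unfolding H_def by (rule sesq_hermitian_swap[OF hZ])
    have H_diag: "Im (H a a) = 0 \<and> 0 \<le> Re (H a a)" for a using Z by (simp add: H_def psd_iff)
    have H_off: "- (cmod c * (Re (H a a) + Re (H b b))) \<le> 2 * Re (c * H a b)" for a b c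
      unfolding H_def by (rule psd_sesq_lower_bound[OF Z])
    have "qform (k*m) (kron_mat k m Z C) f = (\<Sum>a<m. \<Sum>b<m. C$$(a,b) * H a b)"
      unfolding qform_kron_mat H_def ..
    then show ?thesis
      using hermitian_pairing_real[of m C H, OF hC H_sym]
        diag_dominant_pairing_nonneg[of m C H, OF C H_diag H_off] by simp
  qed
  ultimately show ?thesis by (simp add: psd_iff)
qed

definition block :: "nat \<Rightarrow> nat \<Rightarrow> nat \<Rightarrow> complex mat \<Rightarrow> complex mat" where
  "block n R S X = Matrix.mat n n (\<lambda>(p,q). X$$(R*n+p, S*n+q))"

lemma ampliation_entry:
  assumes "R < k" "S < k" "a < m" "b < m"
  shows "ampliation k n m \<Phi> X $$ (R*m+a, S*m+b) = \<Phi> (block n R S X) $$ (a,b)"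
  using assms block_index_lt[of R k a m] block_index_lt[of S k b m]
  by (simp add: ampliation_def block_def)

lemma ampliation_dim [simp]:
  "dim_row (ampliation k n m \<Phi> X) = k*m" "dim_col (ampliation k n m \<Phi> X) = k*m"
  by (simp_all add: ampliation_def)

lemma ampliation_carrier: "ampliation k n m \<Phi> X \<in> carrier_mat (k*m) (k*m)"
  by (simp add: ampliation_def)

lemma ampliation_eqI:
  assumes M: "M \<in> carrier_mat (k*m) (k*m)"
    and entries: "\<And>R S a b. R < k \<Longrightarrow> S < k \<Longrightarrow> a < m \<Longrightarrow> b < m \<Longrightarrow>
      M $$ (R*m+a, S*m+b) = \<Phi> (block n R S X) $$ (a,b)"
  shows "ampliation k n m \<Phi> X = M"
proof (rule eq_matI)
  fix r s assume "r < dim_row M" "s < dim_col M"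
  then have r: "r < k*m" and s: "s < k*m" using M by auto
  show "ampliation k n m \<Phi> X $$ (r,s) = M $$ (r,s)"
    using ampliation_entry[of "r div m" k "s div m" "r mod m" m "s mod m" n \<Phi> X]
      entries[of "r div m" "s div m" "r mod m" "s mod m"]
      block_div_mod_lt[OF r] block_div_mod_lt[OF s] by simp
qed (use M in \<open>auto simp: ampliation_def\<close>)

lemma linear_map_matD:
  assumes "linear_map_mat n m \<Phi>"
  shows "X \<in> carrier_mat n n \<Longrightarrow> \<Phi> X \<in> carrier_mat m m"
    and "X \<in> carrier_mat n n \<Longrightarrow> Y \<in> carrier_mat n n \<Longrightarrow> \<Phi> (X + Y) = \<Phi> X + \<Phi> Y"
    and "X \<in> carrier_mat n n \<Longrightarrow> \<Phi> (c \<cdot>\<^sub>m X) = c \<cdot>\<^sub>m \<Phi> X"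
  using assms unfolding linear_map_mat_def by blast+

lemma completely_positiveD:
  assumes "completely_positive n m \<Phi>"
  shows "linear_map_mat n m \<Phi>"
    and "psd_mat (k*n) X \<Longrightarrow> psd_mat (k*m) (ampliation k n m \<Phi> X)"
  using assms unfolding completely_positive_def by blast+

text \<open>A completely positive map sends the identity to a psd matrix (ampliation with k = 1).\<close>

lemma cp_unit_psd:
  assumes \<Phi>: "completely_positive n m \<Phi>"
  shows "psd_mat m (\<Phi> (1\<^sub>m n))"
proof -
  have carrier: "\<Phi> (1\<^sub>m n) \<in> carrier_mat m m"
    using linear_map_matD(1)[OF completely_positiveD(1)[OF \<Phi>]] by simp
  have "ampliation 1 n m \<Phi> (1\<^sub>m n) = \<Phi> (1\<^sub>m n)"
  proof (rule ampliation_eqI)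
    fix R S a b :: nat assume "R < 1" "S < 1"
    then have "block n R S (1\<^sub>m n) = 1\<^sub>m n" by (auto simp: block_def intro!: eq_matI)
    with \<open>R < 1\<close> \<open>S < 1\<close> show "\<Phi> (1\<^sub>m n) $$ (R*m+a, S*m+b) = \<Phi> (block n R S (1\<^sub>m n)) $$ (a,b)"
      by simp
  qed (use carrier in simp)
  moreover have "psd_mat (1*n) (1\<^sub>m n)" using psd_one[of n] by simp
  then have "psd_mat (1*m) (ampliation 1 n m \<Phi> (1\<^sub>m n))"
    by (rule completely_positiveD(2)[OF \<Phi>])
  ultimately show ?thesis by simp
qed

definition corner :: "nat \<Rightarrow> complex mat \<Rightarrow> complex mat" where
  "corner n Y = Matrix.mat n n (\<lambda>(p,q). Y$$(p,q))"

lemma direct_sum_zero_altdef: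
  "A \<in> carrier_mat n n \<Longrightarrow>
    direct_sum_zero n A = Matrix.mat (n+1) (n+1) (\<lambda>(p,q). if p < n \<and> q < n then A$$(p,q) else 0)"
  unfolding direct_sum_zero_def by (intro eq_matI) auto

lemma direct_sum_zero_carrier: "A \<in> carrier_mat n n \<Longrightarrow> direct_sum_zero n A \<in> carrier_mat (n+1) (n+1)"
  by (simp add: direct_sum_zero_altdef)

lemma direct_sum_zero_add:
  "A \<in> carrier_mat n n \<Longrightarrow> B \<in> carrier_mat n n \<Longrightarrow>
    direct_sum_zero n (A + B) = direct_sum_zero n A + direct_sum_zero n B"
  by (simp add: direct_sum_zero_altdef) (intro eq_matI, auto)

lemma direct_sum_zero_smult:
  "A \<in> carrier_mat n n \<Longrightarrow> direct_sum_zero n (c \<cdot>\<^sub>m A) = c \<cdot>\<^sub>m direct_sum_zero n A"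
  by (simp add: direct_sum_zero_altdef) (intro eq_matI, auto)

lemma corner_direct_sum_zero: "A \<in> carrier_mat n n \<Longrightarrow> corner n (direct_sum_zero n A) = A"
  by (simp add: direct_sum_zero_altdef corner_def) (intro eq_matI, auto)

lemma direct_sum_zero_last: "A \<in> carrier_mat n n \<Longrightarrow> direct_sum_zero n A $$ (n,n) = 0"
  by (simp add: direct_sum_zero_altdef)

text \<open>Index i of a k n-vector, viewed as k blocks of length n, is sent to the corresponding index of
  k blocks of length n+1; the skipped indices are the last ones of each block.\<close>

definition stretch :: "nat \<Rightarrow> nat \<Rightarrow> nat" where
  "stretch n i = i div n * (n+1) + i mod n"

lemma stretch_block: "p < n \<Longrightarrow> stretch n (R*n+p) = R*(n+1)+p"
  by (simp add: stretch_def)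

lemma stretch_div_mod:
  assumes "0 < n"
  shows "stretch n i div (n+1) = i div n" and "stretch n i mod (n+1) = i mod n"
proof -
  have "i mod n < n+1" using assms by (simp add: less_SucI)
  then show "stretch n i div (n+1) = i div n" and "stretch n i mod (n+1) = i mod n"
    unfolding stretch_def by (rule block_index_div, rule block_index_mod)
qed

lemma stretch_inj: "0 < n \<Longrightarrow> inj_on (stretch n) A"
  by (rule inj_onI) (metis stretch_div_mod div_mult_mod_eq)

lemma stretch_image:
  assumes "0 < n"
  shows "stretch n ` {..<k*n} = {j. j < k*(n+1) \<and> j mod (n+1) < n}"
proof (intro equalityI subsetI)
  fix j assume "j \<in> stretch n ` {..<k*n}"
  then obtain i where i: "i < k*n" and j: "j = stretch n i" by auto
  have "j < k*(n+1)"
    unfolding j stretch_def using block_index_lt[of "i div n" k "i mod n" "n+1"] block_div_mod_lt[OF i]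
    by simp
  moreover have "j mod (n+1) < n" unfolding j stretch_div_mod(2)[OF assms] using assms by simp
  ultimately show "j \<in> {j. j < k*(n+1) \<and> j mod (n+1) < n}" by simp
next
  fix j assume "j \<in> {j. j < k*(n+1) \<and> j mod (n+1) < n}"
  then have j: "j < k*(n+1)" and jn: "j mod (n+1) < n" by auto
  let ?i = "j div (n+1) * n + j mod (n+1)"
  have "?i < k*n" using block_index_lt[OF block_div_mod_lt(1)[OF j] jn] .
  moreover have "stretch n ?i = j"
    using stretch_block[OF jn, of "j div (n+1)"] div_mult_mod_eq[of j "n+1"] by simp
  ultimately show "j \<in> stretch n ` {..<k*n}" by force
qed

text \<open>Zero padding: each n x n block of X becomes the (n+1) x (n+1) block X_RS (+) [0].\<close>

definition pad_blocks :: "nat \<Rightarrow> nat \<Rightarrow> complex mat \<Rightarrow> complex mat" where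
  "pad_blocks n k X = Matrix.mat (k*(n+1)) (k*(n+1)) (\<lambda>(i,j).
     if i mod (n+1) < n \<and> j mod (n+1) < n
     then X$$(i div (n+1) * n + i mod (n+1), j div (n+1) * n + j mod (n+1)) else 0)"

lemma psd_pad_blocks:
  assumes n: "0 < n" and X: "psd_mat (k*n) X"
  shows "psd_mat (k*(n+1)) (pad_blocks n k X)"
proof (rule psd_zero_padding[OF X stretch_inj[OF n]])
  show "stretch n ` {..<k*n} \<subseteq> {..<k*(n+1)}" using stretch_image[OF n] by auto
  show "pad_blocks n k X \<in> carrier_mat (k*(n+1)) (k*(n+1))" by (simp add: pad_blocks_def)
  show "pad_blocks n k X $$ (i,j) = 0"
    if "i < k*(n+1)" "j < k*(n+1)" "i \<notin> stretch n ` {..<k*n} \<or> j \<notin> stretch n ` {..<k*n}" for i j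
    using that by (auto simp: pad_blocks_def stretch_image[OF n])
  show "pad_blocks n k X $$ (stretch n a, stretch n b) = X$$(a,b)" if "a < k*n" "b < k*n" for a b
  proof -
    have "stretch n a < k*(n+1)" "stretch n b < k*(n+1)" using that stretch_image[OF n] by auto
    then have "pad_blocks n k X $$ (stretch n a, stretch n b) = X$$(a div n * n + a mod n, b div n * n + b mod n)"
      unfolding pad_blocks_def using n by (simp only: index_mat prod.case stretch_div_mod) simp
    then show ?thesis by simp
  qed
qed

lemma block_pad_blocks:
  assumes "R < k" "S < k"
  shows "block (n+1) R S (pad_blocks n k X) = direct_sum_zero n (block n R S X)"
proof (rule eq_matI)
  fix p q assume "p < dim_row (direct_sum_zero n (block n R S X))" "q < dim_col (direct_sum_zero n (block n R S X))"
  then have pq: "p < n+1" "q < n+1" by (simp_all add: direct_sum_zero_altdef block_def)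
  have "R*(n+1)+p < k*(n+1)" "S*(n+1)+q < k*(n+1)"
    using block_index_lt[OF assms(1) pq(1)] block_index_lt[OF assms(2) pq(2)] .
  then have "block (n+1) R S (pad_blocks n k X) $$ (p,q) =
      (if p < n \<and> q < n then X$$(R*n+p, S*n+q) else 0)"
    unfolding block_def pad_blocks_def using pq
    by (simp only: index_mat prod.case block_index_div block_index_mod)
  then show "block (n+1) R S (pad_blocks n k X) $$ (p,q) = direct_sum_zero n (block n R S X) $$ (p,q)"
    using pq by (simp add: block_def direct_sum_zero_altdef)
qed (simp_all add: direct_sum_zero_altdef block_def)

lemma corner_block:
  assumes "R < k" "S < k"
  shows "corner n (block (n+1) R S Y) = block n R S (principal_submatrix (k*n) (stretch n) Y)"
  using assms block_index_lt[OF assms(1)] block_index_lt[OF assms(2)]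
  by (intro eq_matI) (auto simp: corner_def block_def principal_submatrix_def stretch_block)

lemma linear_compression:
  assumes \<Psi>: "linear_map_mat (n+1) m \<Psi>"
  shows "linear_map_mat n m (\<lambda>X. c \<cdot>\<^sub>m \<Psi> (direct_sum_zero n X))" (is "linear_map_mat n m ?\<Phi>")
  unfolding linear_map_mat_def
proof (intro conjI ballI allI)
  have carrier: "\<Psi> (direct_sum_zero n X) \<in> carrier_mat m m" if "X \<in> carrier_mat n n" for X
    using linear_map_matD(1)[OF \<Psi> direct_sum_zero_carrier[OF that]] .
  fix X :: "complex mat" assume X: "X \<in> carrier_mat n n"
  then show "?\<Phi> X \<in> carrier_mat m m" using carrier by simp
  show "?\<Phi> (a \<cdot>\<^sub>m X) = a \<cdot>\<^sub>m ?\<Phi> X" for a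
    unfolding direct_sum_zero_smult[OF X] linear_map_matD(3)[OF \<Psi> direct_sum_zero_carrier[OF X]]
    using carrier[OF X] by (intro eq_matI) (auto simp: algebra_simps)
  fix Y :: "complex mat" assume Y: "Y \<in> carrier_mat n n"
  show "?\<Phi> (X + Y) = ?\<Phi> X + ?\<Phi> Y"
    unfolding direct_sum_zero_add[OF X Y]
      linear_map_matD(2)[OF \<Psi> direct_sum_zero_carrier[OF X] direct_sum_zero_carrier[OF Y]]
    using carrier[OF X] carrier[OF Y] by (intro eq_matI) (auto simp: algebra_simps)
qed

lemma ampliation_compression:
  assumes \<Psi>: "linear_map_mat (n+1) m \<Psi>"
  shows "ampliation k n m (\<lambda>X. c \<cdot>\<^sub>m \<Psi> (direct_sum_zero n X)) X =
    c \<cdot>\<^sub>m ampliation k (n+1) m \<Psi> (pad_blocks n k X)"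
proof (rule ampliation_eqI)
  fix R S a b assume RS: "R < k" "S < k" and ab: "a < m" "b < m"
  have "ampliation k (n+1) m \<Psi> (pad_blocks n k X) $$ (R*m+a, S*m+b) =
      \<Psi> (direct_sum_zero n (block n R S X)) $$ (a,b)"
    unfolding ampliation_entry[OF RS ab] block_pad_blocks[OF RS] ..
  moreover have "block n R S X \<in> carrier_mat n n" by (simp add: block_def)
  then have "\<Psi> (direct_sum_zero n (block n R S X)) \<in> carrier_mat m m"
    by (rule linear_map_matD(1)[OF \<Psi> direct_sum_zero_carrier])
  ultimately show "(c \<cdot>\<^sub>m ampliation k (n+1) m \<Psi> (pad_blocks n k X)) $$ (R*m+a, S*m+b) =
      (c \<cdot>\<^sub>m \<Psi> (direct_sum_zero n (block n R S X))) $$ (a,b)"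
    using ab block_index_lt[OF RS(1) ab(1)] block_index_lt[OF RS(2) ab(2)] by auto
qed (rule smult_carrier_mat[OF ampliation_carrier])

lemma cp_compression:
  assumes n: "0 < n" and \<Psi>: "completely_positive (n+1) m \<Psi>" and c: "0 \<le> c"
  shows "completely_positive n m (\<lambda>X. complex_of_real c \<cdot>\<^sub>m \<Psi> (direct_sum_zero n X))"
proof -
  have "psd_mat (k*m) (ampliation k n m (\<lambda>X. complex_of_real c \<cdot>\<^sub>m \<Psi> (direct_sum_zero n X)) X)"
    if X: "psd_mat (k*n) X" for k X
    unfolding ampliation_compression[OF completely_positiveD(1)[OF \<Psi>]]
    by (rule psd_smult[OF completely_positiveD(2)[OF \<Psi> psd_pad_blocks[OF n X]] c])
  then show ?thesis
    using linear_compression[OF completely_positiveD(1)[OF \<Psi>]] by (simp add: completely_positive_def)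
qed

definition corner_extension ::
    "nat \<Rightarrow> real \<Rightarrow> (complex mat \<Rightarrow> complex mat) \<Rightarrow> complex mat \<Rightarrow> complex mat \<Rightarrow> complex mat" where
  "corner_extension n \<epsilon> \<Phi> C Y = complex_of_real \<epsilon> \<cdot>\<^sub>m \<Phi> (corner n Y) + Y$$(n,n) \<cdot>\<^sub>m C"

lemma corner_add:
  fixes X Y :: "complex mat"
  shows "X \<in> carrier_mat (n+1) (n+1) \<Longrightarrow> Y \<in> carrier_mat (n+1) (n+1) \<Longrightarrow>
    corner n (X + Y) = corner n X + corner n Y"
  by (intro eq_matI) (auto simp: corner_def)

lemma corner_smult:
  fixes X :: "complex mat"
  shows "X \<in> carrier_mat (n+1) (n+1) \<Longrightarrow> corner n (a \<cdot>\<^sub>m X) = a \<cdot>\<^sub>m corner n X"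
  by (intro eq_matI) (auto simp: corner_def)

lemma linear_corner_extension:
  assumes \<Phi>: "linear_map_mat n m \<Phi>" and C: "C \<in> carrier_mat m m"
  shows "linear_map_mat (n+1) m (corner_extension n \<epsilon> \<Phi> C)"
  unfolding linear_map_mat_def
proof (intro conjI ballI allI)
  have corner_carrier: "corner n Y \<in> carrier_mat n n" for Y by (simp add: corner_def)
  note \<Phi>_corner = linear_map_matD(1)[OF \<Phi> corner_carrier]
  fix X :: "complex mat"
  show "corner_extension n \<epsilon> \<Phi> C X \<in> carrier_mat m m"
    using \<Phi>_corner C by (simp add: corner_extension_def)
  assume X: "X \<in> carrier_mat (n+1) (n+1)"
  show "corner_extension n \<epsilon> \<Phi> C (a \<cdot>\<^sub>m X) = a \<cdot>\<^sub>m corner_extension n \<epsilon> \<Phi> C X" for a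
    unfolding corner_extension_def corner_smult[OF X] linear_map_matD(3)[OF \<Phi> corner_carrier]
    using X \<Phi>_corner[of X] C by (intro eq_matI) (auto simp: algebra_simps)
  fix Y :: "complex mat" assume Y: "Y \<in> carrier_mat (n+1) (n+1)"
  show "corner_extension n \<epsilon> \<Phi> C (X + Y) = corner_extension n \<epsilon> \<Phi> C X + corner_extension n \<epsilon> \<Phi> C Y"
    unfolding corner_extension_def corner_add[OF X Y] linear_map_matD(2)[OF \<Phi> corner_carrier corner_carrier]
    using X Y \<Phi>_corner[of X] \<Phi>_corner[of Y] C by (intro eq_matI) (auto simp: algebra_simps)
qed

lemma ampliation_corner_extension:
  assumes \<Phi>: "linear_map_mat n m \<Phi>" and C: "C \<in> carrier_mat m m"
  shows "ampliation k (n+1) m (corner_extension n \<epsilon> \<Phi> C) Y =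
    complex_of_real \<epsilon> \<cdot>\<^sub>m ampliation k n m \<Phi> (principal_submatrix (k*n) (stretch n) Y) +
    kron_mat k m (principal_submatrix k (\<lambda>R. R*(n+1)+n) Y) C"
    (is "_ = complex_of_real \<epsilon> \<cdot>\<^sub>m ampliation k n m \<Phi> ?Yt + kron_mat k m ?Z C")
proof (rule ampliation_eqI)
  fix R S a b assume RS: "R < k" "S < k" and ab: "a < m" "b < m"
  have "ampliation k n m \<Phi> ?Yt $$ (R*m+a, S*m+b) = \<Phi> (corner n (block (n+1) R S Y)) $$ (a,b)"
    unfolding ampliation_entry[OF RS ab] corner_block[OF RS] ..
  moreover have "kron_mat k m ?Z C $$ (R*m+a, S*m+b) = block (n+1) R S Y $$ (n,n) * C $$ (a,b)"
    using RS ab block_index_lt[OF RS(1) ab(1)] block_index_lt[OF RS(2) ab(2)]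
    by (simp add: kron_mat_def block_def principal_submatrix_def)
  moreover have "\<Phi> (corner n (block (n+1) R S Y)) \<in> carrier_mat m m"
    by (rule linear_map_matD(1)[OF \<Phi>]) (simp add: corner_def)
  ultimately show "(complex_of_real \<epsilon> \<cdot>\<^sub>m ampliation k n m \<Phi> ?Yt + kron_mat k m ?Z C) $$ (R*m+a, S*m+b) =
      corner_extension n \<epsilon> \<Phi> C (block (n+1) R S Y) $$ (a,b)"
    using C ab block_index_lt[OF RS(1) ab(1)] block_index_lt[OF RS(2) ab(2)]
    by (auto simp: corner_extension_def)
qed (intro add_carrier_mat smult_carrier_mat ampliation_carrier kron_mat_carrier)

text \<open>The corner extension of a completely positive Phi by a diagonally dominant C is completely
  positive, since both summands of its ampliation are psd.\<close>

lemma cp_corner_extension: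
  assumes n: "0 < n" and \<Phi>: "completely_positive n m \<Phi>" and C: "diag_dominant m C" and \<epsilon>: "0 \<le> \<epsilon>"
  shows "completely_positive (n+1) m (corner_extension n \<epsilon> \<Phi> C)"
proof -
  have C_carrier: "C \<in> carrier_mat m m" using C by (simp add: diag_dominant_def hermitian_carrier)
  have "psd_mat (k*m) (ampliation k (n+1) m (corner_extension n \<epsilon> \<Phi> C) Y)"
    if Y: "psd_mat (k*(n+1)) Y" for k Y
  proof -
    have "stretch n ` {..<k*n} \<subseteq> {..<k*(n+1)}" using stretch_image[OF n, of k] by auto
    then have Yt: "psd_mat (k*n) (principal_submatrix (k*n) (stretch n) Y)"
      by (rule psd_principal_submatrix[OF Y stretch_inj[OF n]])
    have Z: "psd_mat k (principal_submatrix k (\<lambda>R. R*(n+1)+n) Y)"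
    proof (rule psd_principal_submatrix[OF Y])
      show "inj_on (\<lambda>R. R*(n+1)+n) {..<k}"
      proof (rule inj_onI)
        fix x y assume "x*(n+1)+n = y*(n+1)+n"
        then have "x*(n+1) = y*(n+1)" by (rule add_right_imp_eq)
        then show "x = y" by (rule mult_right_cancel[THEN iffD1, rotated]) simp
      qed
      show "(\<lambda>R. R*(n+1)+n) ` {..<k} \<subseteq> {..<k*(n+1)}" using block_index_lt[of _ k n "n+1"] by auto
    qed
    show ?thesis
      unfolding ampliation_corner_extension[OF completely_positiveD(1)[OF \<Phi>] C_carrier]
      by (rule psd_add[OF psd_smult[OF completely_positiveD(2)[OF \<Phi> Yt] \<epsilon>] psd_kron_diag_dominant[OF Z C]])
  qed
  then show ?thesis
    using linear_corner_extension[OF completely_positiveD(1)[OF \<Phi>] C_carrier]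
    by (simp add: completely_positive_def)
qed

lemma corner_extension_unital:
  assumes "\<Phi> (1\<^sub>m n) \<in> carrier_mat m m"
  shows "corner_extension n \<epsilon> \<Phi> (1\<^sub>m m - complex_of_real \<epsilon> \<cdot>\<^sub>m \<Phi> (1\<^sub>m n)) (1\<^sub>m (n+1)) = 1\<^sub>m m"
proof -
  have "corner n (1\<^sub>m (n+1)) = 1\<^sub>m n" by (intro eq_matI) (auto simp: corner_def)
  then show ?thesis using assms by (intro eq_matI) (auto simp: corner_extension_def)
qed

lemma corner_extension_direct_sum_zero:
  assumes "A \<in> carrier_mat n n" "\<Phi> A \<in> carrier_mat m m" "C \<in> carrier_mat m m"
  shows "corner_extension n \<epsilon> \<Phi> C (direct_sum_zero n A) = complex_of_real \<epsilon> \<cdot>\<^sub>m \<Phi> A"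
  using assms by (intro eq_matI)
    (auto simp: corner_extension_def corner_direct_sum_zero direct_sum_zero_last)

lemma unital_cp_extension:
  assumes n: "0 < n" and \<Phi>: "completely_positive n m \<Phi>"
  obtains \<epsilon> :: real and \<Psi> where "\<epsilon> > 0" and "completely_positive (n+1) m \<Psi>"
    and "unital_map (n+1) m \<Psi>"
    and "\<And>A. A \<in> carrier_mat n n \<Longrightarrow> \<Psi> (direct_sum_zero n A) = complex_of_real \<epsilon> \<cdot>\<^sub>m \<Phi> A"
proof -
  have "hermitian_mat m (\<Phi> (1\<^sub>m n))" using cp_unit_psd[OF \<Phi>] by (simp add: psd_mat_def)
  then obtain \<epsilon> where \<epsilon>: "\<epsilon> > 0" and C: "diag_dominant m (1\<^sub>m m - complex_of_real \<epsilon> \<cdot>\<^sub>m \<Phi> (1\<^sub>m n))"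
    using diag_dominant_shift by blast
  let ?C = "1\<^sub>m m - complex_of_real \<epsilon> \<cdot>\<^sub>m \<Phi> (1\<^sub>m n)"
  have C_carrier: "?C \<in> carrier_mat m m" using C by (simp add: diag_dominant_def hermitian_carrier)
  show ?thesis
  proof
    show "completely_positive (n+1) m (corner_extension n \<epsilon> \<Phi> ?C)"
      using cp_corner_extension[OF n \<Phi> C] \<epsilon> by simp
    show "unital_map (n+1) m (corner_extension n \<epsilon> \<Phi> ?C)"
      unfolding unital_map_def
      by (rule corner_extension_unital[OF linear_map_matD(1)[OF completely_positiveD(1)[OF \<Phi>]]]) simp
    show "corner_extension n \<epsilon> \<Phi> ?C (direct_sum_zero n A) = complex_of_real \<epsilon> \<cdot>\<^sub>m \<Phi> A"
      if "A \<in> carrier_mat n n" for A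
      using corner_extension_direct_sum_zero[where \<Phi> = \<Phi>, OF that
          linear_map_matD(1)[OF completely_positiveD(1)[OF \<Phi>] that] C_carrier] .
  qed (rule \<epsilon>)
qed

theorem theorem4p1:
  fixes n m k :: nat and A B :: "nat \<Rightarrow> complex mat"
  assumes "1 \<le> n" and "1 \<le> m"
    and "\<forall>j<k. hermitian_mat n (A j)"
    and "\<forall>j<k. hermitian_mat m (B j)"
  shows "(\<exists>\<Phi>. completely_positive n m \<Phi> \<and> (\<forall>j<k. \<Phi> (A j) = B j)) \<longleftrightarrow>
         (\<exists>(\<gamma>::real) \<Psi>. \<gamma> > 0 \<and> completely_positive (n + 1) m \<Psi> \<and> unital_map (n + 1) m \<Psi> \<and>
            (\<forall>j<k. \<Psi> (direct_sum_zero n (A j)) = complex_of_real (inverse \<gamma>) \<cdot>\<^sub>m B j))"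
proof
  assume "\<exists>\<Phi>. completely_positive n m \<Phi> \<and> (\<forall>j<k. \<Phi> (A j) = B j)"
  then obtain \<Phi> where \<Phi>: "completely_positive n m \<Phi>" and interp: "\<forall>j<k. \<Phi> (A j) = B j" by blast
  obtain \<epsilon> :: real and \<Psi> where \<epsilon>: "\<epsilon> > 0" and \<Psi>: "completely_positive (n+1) m \<Psi>" "unital_map (n+1) m \<Psi>"
    and restrict: "\<And>A. A \<in> carrier_mat n n \<Longrightarrow> \<Psi> (direct_sum_zero n A) = complex_of_real \<epsilon> \<cdot>\<^sub>m \<Phi> A"
    using unital_cp_extension[OF _ \<Phi>] assms(1) by auto
  have "\<forall>j<k. \<Psi> (direct_sum_zero n (A j)) = complex_of_real (inverse (inverse \<epsilon>)) \<cdot>\<^sub>m B j"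
    using interp restrict assms(3) hermitian_carrier by simp
  then show "\<exists>(\<gamma>::real) \<Psi>. \<gamma> > 0 \<and> completely_positive (n + 1) m \<Psi> \<and> unital_map (n + 1) m \<Psi> \<and>
      (\<forall>j<k. \<Psi> (direct_sum_zero n (A j)) = complex_of_real (inverse \<gamma>) \<cdot>\<^sub>m B j)"
    using \<epsilon> \<Psi> by (intro exI[of _ "inverse \<epsilon>"] exI[of _ \<Psi>]) simp
next
  assume "\<exists>(\<gamma>::real) \<Psi>. \<gamma> > 0 \<and> completely_positive (n + 1) m \<Psi> \<and> unital_map (n + 1) m \<Psi> \<and>
      (\<forall>j<k. \<Psi> (direct_sum_zero n (A j)) = complex_of_real (inverse \<gamma>) \<cdot>\<^sub>m B j)"
  then obtain \<gamma> :: real and \<Psi> where \<gamma>: "\<gamma> > 0" and \<Psi>: "completely_positive (n+1) m \<Psi>"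
    and interp: "\<forall>j<k. \<Psi> (direct_sum_zero n (A j)) = complex_of_real (inverse \<gamma>) \<cdot>\<^sub>m B j" by blast
  let ?\<Phi> = "\<lambda>X. complex_of_real \<gamma> \<cdot>\<^sub>m \<Psi> (direct_sum_zero n X)"
  have "completely_positive n m ?\<Phi>" using cp_compression[OF _ \<Psi>] \<gamma> assms(1) by simp
  moreover have "?\<Phi> (A j) = B j" if "j < k" for j
    using that interp \<gamma> hermitian_carrier assms(4) by (auto intro!: eq_matI)
  ultimately show "\<exists>\<Phi>. completely_positive n m \<Phi> \<and> (\<forall>j<k. \<Phi> (A j) = B j)" by blast
qed

end
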